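(* Let $F$ satisfy (A1) on $Q_1=B_1(0)\times(-1,1)$, and let $u\in C(Q_1)$ be a viscosity solution of $$F(x,t,D^2u)-\partial_tu=f\quad\text{in }\{u>0\},$$ where $f\ge c_0>0$. Then for every $(z,s)\in\overline{\{u>0\}}$ and every $r>0$ with $Q_r(z,s)\subset Q_1$, $$\sup_{(x,t)\in\partial_pQ^-_r(z,s)}u(x,t)\ge\mu_0r^2+u(z,s),\qquad \mu_0=\min\Big(\frac{c_0}{2},\frac{c_0}{4n\Lambda}\Big).$$
   Context: (A1): $F(x,t,M)$ is uniformly elliptic with constants $0<\lambda\le\Lambda$, i.e. $\lambda\|P\|\le F(x,t,M+P)-F(x,t,M)\le\Lambda\|P\|$ for every nonnegative definite symmetric $P$ ($\|P\|$ its largest eigenvalue); $F$ is concave, $C^{1,\alpha}$ in $M$, $C^{1,\alpha}_{\mathrm{loc}}$ in $(x,t)$, and $F(\cdot,\cdot,0)=0$. $Q_r(z,s)=B_r(z)\times(s-r^2,s+r^2)$, $Q^-_r(z,s)=B_r(z)\times(s-r^2,s]$, and $\partial_pQ^-_r(z,s)=(\partial B_r(z)\times[s-r^2,s])\cup(B_r(z)\times\{s-r^2\})$ is its parabolic boundary. *)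

theory Defs
  imports "HOL-Analysis.Analysis"
begin

type_synonym 'n pt = "(real ^ 'n) \<times> real"
type_synonym 'n mat = "real ^ 'n ^ 'n"

definition Sym :: "'n::finite mat set" where
  "Sym = {M. transpose M = M}"

definition nonneg_def :: "'n::finite mat \<Rightarrow> bool" where
  "nonneg_def P \<longleftrightarrow> P \<in> Sym \<and> (\<forall>v. 0 \<le> v \<bullet> (P *v v))"

definition max_eig :: "'n::finite mat \<Rightarrow> real" where
  "max_eig P = Max {\<mu>. \<exists>v. v \<noteq> 0 \<and> P *v v = \<mu> *\<^sub>R v}"

definition Qcyl :: "real \<Rightarrow> 'n::finite pt \<Rightarrow> 'n pt set" where
  "Qcyl r zs = ball (fst zs) r \<times> {snd zs - r^2 <..< snd zs + r^2}"

definition Qminus :: "real \<Rightarrow> 'n::finite pt \<Rightarrow> 'n pt set" where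
  "Qminus r zs = ball (fst zs) r \<times> {snd zs - r^2 <.. snd zs}"

definition par_bdry :: "real \<Rightarrow> 'n::finite pt \<Rightarrow> 'n pt set" where
  "par_bdry r zs = (sphere (fst zs) r \<times> {snd zs - r^2 .. snd zs})
                   \<union> (ball (fst zs) r \<times> {snd zs - r^2})"

definition Q1 :: "'n::finite pt set" where
  "Q1 = Qcyl 1 (0, 0)"

definition A1 :: "'n::finite pt set \<Rightarrow> real \<Rightarrow> real \<Rightarrow> real \<Rightarrow>
                  (real ^ 'n \<Rightarrow> real \<Rightarrow> 'n mat \<Rightarrow> real) \<Rightarrow> bool" where
  "A1 U lam Lam \<alpha> F \<longleftrightarrow>
     0 < lam \<and> lam \<le> Lam \<and> 0 < \<alpha> \<and> \<alpha> < 1 \<and>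
     \<comment> \<open>uniform ellipticity\<close>
     (\<forall>x t M P. (x, t) \<in> U \<and> M \<in> Sym \<and> nonneg_def P \<longrightarrow>
        lam * max_eig P \<le> F x t (M + P) - F x t M \<and>
        F x t (M + P) - F x t M \<le> Lam * max_eig P) \<and>
     \<comment> \<open>concavity in M\<close>
     (\<forall>x t. (x, t) \<in> U \<longrightarrow> concave_on Sym (F x t)) \<and>
     \<comment> \<open>C^{1,alpha} in M\<close>
     (\<forall>x t. (x, t) \<in> U \<longrightarrow>
        (\<exists>DF C. (\<forall>M\<in>Sym. (F x t has_derivative DF M) (at M within Sym)) \<and>
           (\<forall>M\<in>Sym. \<forall>N\<in>Sym. onorm (\<lambda>H. DF M H - DF N H) \<le> C * norm (M - N) powr \<alpha>))) \<and>
     \<comment> \<open>C^{1,alpha}_loc in (x,t)\<close>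
     (\<forall>M\<in>Sym. \<exists>DF. (\<forall>p\<in>U. ((\<lambda>q. F (fst q) (snd q) M) has_derivative DF p) (at p)) \<and>
        (\<forall>K. compact K \<and> K \<subseteq> U \<longrightarrow>
           (\<exists>C. \<forall>p\<in>K. \<forall>q\<in>K. onorm (\<lambda>h. DF p h - DF q h) \<le> C * dist p q powr \<alpha>))) \<and>
     \<comment> \<open>F(x,t,0) = 0\<close>
     (\<forall>x t. (x, t) \<in> U \<longrightarrow> F x t 0 = 0)"

definition C21_near :: "('n::finite pt \<Rightarrow> real) \<Rightarrow> ('n pt \<Rightarrow> real ^ 'n) \<Rightarrow> ('n pt \<Rightarrow> 'n mat)
                        \<Rightarrow> ('n pt \<Rightarrow> real) \<Rightarrow> 'n pt \<Rightarrow> bool" where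
  "C21_near \<phi> Dx D2 Dt p0 \<longleftrightarrow>
     (\<exists>e>0. (\<forall>p\<in>ball p0 e.
         ((\<lambda>y. \<phi> (y, snd p)) has_derivative (\<lambda>h. Dx p \<bullet> h)) (at (fst p)) \<and>
         ((\<lambda>y. Dx (y, snd p)) has_derivative (\<lambda>h. D2 p *v h)) (at (fst p)) \<and>
         ((\<lambda>\<tau>. \<phi> (fst p, \<tau>)) has_real_derivative Dt p) (at (snd p))) \<and>
       continuous_on (ball p0 e) \<phi> \<and> continuous_on (ball p0 e) Dx \<and>
       continuous_on (ball p0 e) D2 \<and> continuous_on (ball p0 e) Dt)"

definition visc_sub :: "(real ^ 'n \<Rightarrow> real \<Rightarrow> 'n mat \<Rightarrow> real) \<Rightarrow> ('n::finite pt \<Rightarrow> real)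
                        \<Rightarrow> 'n pt set \<Rightarrow> ('n pt \<Rightarrow> real) \<Rightarrow> bool" where
  "visc_sub F f \<Omega> u \<longleftrightarrow>
     (\<forall>p0 \<phi> Dx D2 Dt. p0 \<in> \<Omega> \<and> C21_near \<phi> Dx D2 Dt p0 \<and>
        (\<exists>e>0. \<forall>p\<in>ball p0 e \<inter> \<Omega>. u p - \<phi> p \<le> u p0 - \<phi> p0) \<longrightarrow>
        F (fst p0) (snd p0) (D2 p0) - Dt p0 \<ge> f p0)"

definition visc_super :: "(real ^ 'n \<Rightarrow> real \<Rightarrow> 'n mat \<Rightarrow> real) \<Rightarrow> ('n::finite pt \<Rightarrow> real)
                        \<Rightarrow> 'n pt set \<Rightarrow> ('n pt \<Rightarrow> real) \<Rightarrow> bool" where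
  "visc_super F f \<Omega> u \<longleftrightarrow>
     (\<forall>p0 \<phi> Dx D2 Dt. p0 \<in> \<Omega> \<and> C21_near \<phi> Dx D2 Dt p0 \<and>
        (\<exists>e>0. \<forall>p\<in>ball p0 e \<inter> \<Omega>. u p - \<phi> p \<ge> u p0 - \<phi> p0) \<longrightarrow>
        F (fst p0) (snd p0) (D2 p0) - Dt p0 \<le> f p0)"

definition visc_sol :: "(real ^ 'n \<Rightarrow> real \<Rightarrow> 'n mat \<Rightarrow> real) \<Rightarrow> ('n::finite pt \<Rightarrow> real)
                        \<Rightarrow> 'n pt set \<Rightarrow> ('n pt \<Rightarrow> real) \<Rightarrow> bool" where
  "visc_sol F f \<Omega> u \<longleftrightarrow> continuous_on \<Omega> u \<and> visc_sub F f \<Omega> u \<and> visc_super F f \<Omega> u"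

end

theory Submission imports Defs begin

text \<open>
  Compare u, at a point (z0, s0) of the positivity set, with the parabolic barrier
  \<mu> (|x - z0|^2 + (s0 - t)) + \<epsilon> / (s0 - t) on the closure of {u > 0} in the lower cylinder.
  For \<mu> (2 \<Lambda> + 1) \<le> c0 the barrier is a strict supersolution, so u minus the barrier cannot
  attain a positive maximum at an interior point of {u > 0}; it is nonpositive where u vanishes, and the
  singular term \<epsilon> / (s0 - t) makes it negative near the top. Hence the maximum sits on the parabolic
  boundary, where the barrier is at least \<mu> r^2. The bound for points of the closure of {u > 0}
  follows by translating cylinders and using uniform continuity of u.
\<close>

lemma le_Sup_image_if_approximated:
  fixes u :: "'a \<Rightarrow> real"
  assumes "bdd_above (u ` S)" and "\<And>\<eta>. 0 < \<eta> \<Longrightarrow> \<exists>q \<in> S. a - \<eta> \<le> u q"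
  shows "a \<le> Sup (u ` S)"
proof (rule field_le_epsilon)
  fix \<eta> :: real assume "0 < \<eta>"
  then obtain q where "q \<in> S" "a - \<eta> \<le> u q" using assms(2) by blast
  moreover have "u q \<le> Sup (u ` S)" using assms(1) \<open>q \<in> S\<close> by (intro cSup_upper) auto
  ultimately show "a \<le> Sup (u ` S) + \<eta>" by linarith
qed

lemma continuous_on_close_at_earlier_time:
  fixes u :: "'a::metric_space \<times> real \<Rightarrow> real"
  assumes "continuous_on S u" "(x, t) \<in> S" "{x} \<times> {t - T..t} \<subseteq> S" "0 < T" "0 < e"
  shows "\<exists>\<tau>. 0 < \<tau> \<and> \<tau> \<le> T \<and> \<bar>u (x, t - \<tau>) - u (x, t)\<bar> < e"
proof -
  obtain d where "0 < d" and d: "\<forall>p\<in>S. dist p (x, t) < d \<longrightarrow> dist (u p) (u (x, t)) < e"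
    using assms(1,2,5) unfolding continuous_on_iff by blast
  define \<tau> where "\<tau> = min T (d / 2)"
  have "(x, t - \<tau>) \<in> S" "dist (x, t - \<tau>) (x, t) < d"
    using assms(3,4) \<open>0 < d\<close> by (auto simp: \<tau>_def dist_Pair_Pair dist_real_def)
  then show ?thesis
    using d assms(4) \<open>0 < d\<close> by (intro exI[of _ \<tau>]) (auto simp: \<tau>_def dist_real_def)
qed

lemma matrix_vector_mult_mat: "(mat c :: real^'n::finite^'n) *v x = c *\<^sub>R x"
proof -
  have "(\<Sum>j\<in>UNIV. (if i = j then c else 0) * x $ j) = (\<Sum>j\<in>UNIV. if i = j then c * x $ j else 0)"
    for i :: 'n by (rule sum.cong) auto
  then show ?thesis by (simp add: vec_eq_iff matrix_vector_mult_def mat_def)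
qed

lemma max_eig_mat: "max_eig (mat c :: real^'n::finite^'n) = c"
proof -
  have "{\<mu>. \<exists>v::real^'n. v \<noteq> 0 \<and> mat c *v v = \<mu> *\<^sub>R v} = {c}"
    by (auto simp: matrix_vector_mult_mat axis_eq_0_iff intro!: exI[of _ "axis undefined 1"])
  then show ?thesis by (simp add: max_eig_def)
qed

lemma A1_scalar_matrix_le:
  fixes F :: "real^'n::finite \<Rightarrow> real \<Rightarrow> real^'n^'n \<Rightarrow> real"
  assumes "A1 U lam Lam \<alpha> F" "(x, t) \<in> U" "0 \<le> c"
  shows "F x t (mat c) \<le> Lam * c"
proof -
  have "(0::real^'n^'n) \<in> Sym" by (simp add: Sym_def transpose_def vec_eq_iff)
  moreover have "nonneg_def (mat c :: real^'n^'n)"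
    using assms(3) by (simp add: nonneg_def_def Sym_def transpose_mat matrix_vector_mult_mat)
  ultimately show ?thesis
    using assms(1,2) unfolding A1_def by (fastforce simp: max_eig_mat)
qed

lemma open_Q1: "open (Q1 :: 'n::finite pt set)"
  unfolding Q1_def Qcyl_def by (intro open_Times open_ball open_greaterThanLessThan)

definition closed_Qminus :: "real \<Rightarrow> 'n::finite pt \<Rightarrow> 'n pt set" where
  "closed_Qminus r zs = cball (fst zs) r \<times> {snd zs - r^2 .. snd zs}"

lemma compact_closed_Qminus: "compact (closed_Qminus r zs)"
  unfolding closed_Qminus_def by (intro compact_Times compact_cball compact_Icc)

lemma par_bdry_subset_closed_Qminus: "par_bdry r zs \<subseteq> closed_Qminus r zs"
  unfolding par_bdry_def closed_Qminus_def by auto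

lemma closed_Qminus_subset_Qcyl_Un_par_bdry:
  "closed_Qminus r zs \<subseteq> Qcyl r zs \<union> par_bdry r zs"
  unfolding closed_Qminus_def Qcyl_def par_bdry_def
  by (auto simp: less_le power2_eq_square dest: dist_pos_lt)

lemma compact_par_bdry: "compact (par_bdry r zs)"
proof -
  have "par_bdry r zs = sphere (fst zs) r \<times> {snd zs - r^2 .. snd zs} \<union> cball (fst zs) r \<times> {snd zs - r^2}"
    unfolding par_bdry_def by (auto simp: less_le)
  then show ?thesis
    by (metis compact_Un compact_Times compact_sphere compact_Icc compact_cball compact_sing)
qed

lemma translate_mem_closed_Qminus:
  "w + v \<in> closed_Qminus r (zs + v) \<longleftrightarrow> w \<in> closed_Qminus r zs"
  by (cases w, cases v, cases zs) (simp add: closed_Qminus_def dist_add_cancel2)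

lemma translate_mem_par_bdry:
  "w + v \<in> par_bdry r (zs + v) \<longleftrightarrow> w \<in> par_bdry r zs"
  by (cases w, cases v, cases zs) (simp add: par_bdry_def dist_add_cancel2)

definition barrier :: "real \<Rightarrow> real \<Rightarrow> 'n::finite pt \<Rightarrow> 'n pt \<Rightarrow> real" where
  "barrier \<mu> \<epsilon> p0 p =
     \<mu> * ((fst p - fst p0) \<bullet> (fst p - fst p0) + (snd p0 - snd p)) + \<epsilon> / (snd p0 - snd p)"

lemma C21_near_barrier:
  assumes "snd q < snd p0"
  shows "C21_near (barrier \<mu> \<epsilon> p0) (\<lambda>p. (2 * \<mu>) *\<^sub>R (fst p - fst p0)) (\<lambda>_. mat (2 * \<mu>))
           (\<lambda>p. \<epsilon> / (snd p0 - snd p)^2 - \<mu>) q"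
  unfolding C21_near_def
proof (intro exI[of _ "snd p0 - snd q"] conjI ballI)
  fix p assume "p \<in> ball q (snd p0 - snd q)"
  then have "snd p0 - snd p \<noteq> 0"
    using dist_snd_le[of q p] by (auto simp: dist_real_def)
  then show "((\<lambda>\<tau>. barrier \<mu> \<epsilon> p0 (fst p, \<tau>)) has_real_derivative \<epsilon> / (snd p0 - snd p)^2 - \<mu>) (at (snd p))"
    unfolding barrier_def by (auto intro!: derivative_eq_intros simp: field_simps power2_eq_square)
  show "((\<lambda>y. barrier \<mu> \<epsilon> p0 (y, snd p)) has_derivative (\<lambda>h. (2 * \<mu>) *\<^sub>R (fst p - fst p0) \<bullet> h)) (at (fst p))"
    unfolding barrier_def by (auto intro!: derivative_eq_intros ext simp: inner_commute algebra_simps)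
  show "((\<lambda>y. (2 * \<mu>) *\<^sub>R (fst (y, snd p) - fst p0)) has_derivative (\<lambda>h. mat (2 * \<mu>) *v h)) (at (fst p))"
    by (auto intro!: derivative_eq_intros ext simp: matrix_vector_mult_mat)
next
  have "snd p0 - snd p \<noteq> 0" if "p \<in> ball q (snd p0 - snd q)" for p
    using that dist_snd_le[of q p] by (auto simp: dist_real_def)
  then show "continuous_on (ball q (snd p0 - snd q)) (barrier \<mu> \<epsilon> p0)"
    and "continuous_on (ball q (snd p0 - snd q)) (\<lambda>p. \<epsilon> / (snd p0 - snd p)^2 - \<mu>)"
    unfolding barrier_def by (auto intro!: continuous_intros)
qed (use assms in \<open>auto intro!: continuous_intros\<close>)

lemma visc_sub_barrier_bound:
  fixes F :: "real^'n::finite \<Rightarrow> real \<Rightarrow> real^'n^'n \<Rightarrow> real"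
  assumes "A1 U lam Lam \<alpha> F" and "visc_sub F f \<Omega> u" and "\<Omega> \<subseteq> U"
    and "q \<in> \<Omega>" and "snd q < snd p0" and "0 \<le> \<mu>" and "0 < \<epsilon>"
    and "\<exists>e>0. \<forall>p\<in>ball q e \<inter> \<Omega>. u p - barrier \<mu> \<epsilon> p0 p \<le> u q - barrier \<mu> \<epsilon> p0 q"
  shows "f q < (2 * Lam + 1) * \<mu>"
proof -
  have "f q \<le> F (fst q) (snd q) (mat (2 * \<mu>)) - (\<epsilon> / (snd p0 - snd q)^2 - \<mu>)"
    using assms(2,4,8) C21_near_barrier[OF assms(5)] unfolding visc_sub_def by blast
  moreover have "F (fst q) (snd q) (mat (2 * \<mu>)) \<le> Lam * (2 * \<mu>)"
    using A1_scalar_matrix_le[OF assms(1)] assms(3,4,6) by (cases q) auto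
  \<comment> \<open>strict, so the non-strict bound \<open>(2 * Lam + 1) * \<mu> \<le> c0\<close> suffices later\<close>
  moreover have "0 < \<epsilon> / (snd p0 - snd q)^2" using assms(5,7) by simp
  ultimately show ?thesis by (simp add: algebra_simps)
qed

lemma barrier_ge_time_term:
  assumes "snd p < snd p0" "0 \<le> \<mu>"
  shows "\<epsilon> / (snd p0 - snd p) \<le> barrier \<mu> \<epsilon> p0 p"
  using assms unfolding barrier_def by simp

lemma barrier_ge_on_par_bdry:
  assumes "p \<in> par_bdry \<rho> p0" "snd p < snd p0" "0 \<le> \<mu>" "0 \<le> \<epsilon>"
  shows "\<mu> * \<rho>^2 \<le> barrier \<mu> \<epsilon> p0 p"
proof -
  have "(fst p - fst p0) \<bullet> (fst p - fst p0) = (dist (fst p0) (fst p))^2"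
    by (simp add: dist_norm power2_norm_eq_inner norm_minus_commute)
  then have "\<rho>^2 \<le> (fst p - fst p0) \<bullet> (fst p - fst p0) + (snd p0 - snd p)"
    using assms(1,2) unfolding par_bdry_def by auto
  then show ?thesis
    using assms(2-4) unfolding barrier_def by (simp add: mult_left_mono add_increasing2)
qed

lemma barrier_max_on_par_bdry:
  fixes F :: "real^'n::finite \<Rightarrow> real \<Rightarrow> real^'n^'n \<Rightarrow> real" and u f :: "'n pt \<Rightarrow> real"
    and U :: "'n pt set" and p0 :: "'n pt" and \<rho> \<delta> :: real
  defines "\<Omega> \<equiv> {p \<in> U. u p > 0}"
  defines "K \<equiv> closure \<Omega> \<inter> (cball (fst p0) \<rho> \<times> {snd p0 - \<rho>^2 .. snd p0 - \<delta>})"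
  assumes A: "A1 U lam Lam \<alpha> F" and sub: "visc_sub F f \<Omega> u"
    and fc: "\<forall>p \<in> \<Omega>. c0 \<le> f p" and c0: "(2 * Lam + 1) * \<mu> \<le> c0"
    and "0 \<le> \<mu>" "0 < \<epsilon>" "0 < \<delta>"
    and CU: "closed_Qminus \<rho> p0 \<subseteq> U" and uB: "\<forall>p \<in> closed_Qminus \<rho> p0. u p \<le> \<epsilon> / \<delta>"
    and "q \<in> K" and qmax: "\<forall>p \<in> K. u p - barrier \<mu> \<epsilon> p0 p \<le> u q - barrier \<mu> \<epsilon> p0 q"
    and qpos: "0 < u q - barrier \<mu> \<epsilon> p0 q"
  shows "q \<in> par_bdry \<rho> p0"
proof (rule ccontr)
  assume "q \<notin> par_bdry \<rho> p0"
  obtain x t where q: "q = (x, t)" by fastforce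
  have "q \<in> closure \<Omega>" "dist (fst p0) x \<le> \<rho>" "snd p0 - \<rho>^2 \<le> t" "t \<le> snd p0 - \<delta>"
    using \<open>q \<in> K\<close> by (auto simp: K_def q)
  with \<open>q \<notin> par_bdry \<rho> p0\<close> \<open>0 < \<delta>\<close>
  have inner: "dist (fst p0) x < \<rho>" "snd p0 - \<rho>^2 < t" and qC: "q \<in> closed_Qminus \<rho> p0"
    by (auto simp: par_bdry_def closed_Qminus_def q)
  have early: "snd q < snd p0" using \<open>t \<le> snd p0 - \<delta>\<close> \<open>0 < \<delta>\<close> by (simp add: q)
  have "0 \<le> \<epsilon> / (snd p0 - snd q)" using early \<open>0 < \<epsilon>\<close> by simp
  then have "0 \<le> barrier \<mu> \<epsilon> p0 q"
    using barrier_ge_time_term[OF early \<open>0 \<le> \<mu>\<close>, of \<epsilon>] by linarith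
  with qpos have "q \<in> \<Omega>" using CU qC by (auto simp: \<Omega>_def)
  have "t < snd p0 - \<delta>"
  proof (rule ccontr)
    assume "\<not> t < snd p0 - \<delta>"
    then have "\<epsilon> / \<delta> \<le> barrier \<mu> \<epsilon> p0 q"
      using barrier_ge_time_term[OF early \<open>0 \<le> \<mu>\<close>, of \<epsilon>] \<open>t \<le> snd p0 - \<delta>\<close> by (simp add: q)
    then show False using uB qC qpos by fastforce
  qed
  define e where "e = min (\<rho> - dist (fst p0) x) (min (t - (snd p0 - \<rho>^2)) (snd p0 - \<delta> - t))"
  have "\<exists>e>0. \<forall>p\<in>ball q e \<inter> \<Omega>. u p - barrier \<mu> \<epsilon> p0 p \<le> u q - barrier \<mu> \<epsilon> p0 q"
  proof (intro exI[of _ e] conjI ballI)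
    show "0 < e" using inner \<open>t < snd p0 - \<delta>\<close> by (simp add: e_def)
    fix p assume p: "p \<in> ball q e \<inter> \<Omega>"
    then have close: "dist x (fst p) < e" "dist t (snd p) < e"
      using dist_fst_le[of q p] dist_snd_le[of q p] by (auto simp: q)
    have "dist (fst p0) (fst p) \<le> \<rho>"
      using dist_triangle[of "fst p0" "fst p" x] close by (simp add: e_def)
    moreover have "snd p0 - \<rho>^2 \<le> snd p" "snd p \<le> snd p0 - \<delta>"
      using close by (auto simp: e_def dist_real_def)
    ultimately have "p \<in> K" using p closure_subset by (cases p) (auto simp: K_def)
    then show "u p - barrier \<mu> \<epsilon> p0 p \<le> u q - barrier \<mu> \<epsilon> p0 q" using qmax by blast
  qed
  then have "f q < (2 * Lam + 1) * \<mu>"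
    using visc_sub_barrier_bound[OF A sub _ \<open>q \<in> \<Omega>\<close> early \<open>0 \<le> \<mu>\<close> \<open>0 < \<epsilon>\<close>] by (auto simp: \<Omega>_def)
  then show False using fc c0 \<open>q \<in> \<Omega>\<close> by fastforce
qed

lemma growth_from_positive_point:
  fixes F :: "real^'n::finite \<Rightarrow> real \<Rightarrow> real^'n^'n \<Rightarrow> real" and u f :: "'n pt \<Rightarrow> real"
    and U :: "'n pt set"
  defines "\<Omega> \<equiv> {p \<in> U. u p > 0}"
  assumes A: "A1 U lam Lam \<alpha> F" and uc: "continuous_on U u" and sub: "visc_sub F f \<Omega> u"
    and fc: "\<forall>p \<in> \<Omega>. c0 \<le> f p" and c0: "(2 * Lam + 1) * \<mu> \<le> c0" and "0 \<le> \<mu>"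
    and "p0 \<in> \<Omega>" and "0 < \<rho>" and CU: "closed_Qminus \<rho> p0 \<subseteq> U" and "0 < \<eta>"
  shows "\<exists>q \<in> par_bdry \<rho> p0. \<mu> * \<rho>^2 + u p0 - \<eta> \<le> u q"
proof -
  obtain z0 s0 where p0: "p0 = (z0, s0)" by fastforce
  define G where "G \<epsilon> p = u p - barrier \<mu> \<epsilon> p0 p" for \<epsilon> p
  have "0 < u p0" using \<open>p0 \<in> \<Omega>\<close> by (simp add: \<Omega>_def)
  define \<eta>' where "\<eta>' = min \<eta> (u p0 / 2)"
  have \<eta>'_le: "\<eta>' \<le> \<eta>" "\<eta>' \<le> u p0 / 2" by (simp_all add: \<eta>'_def)
  have "0 < \<eta>'" using \<open>0 < \<eta>\<close> \<open>0 < u p0\<close> by (simp add: \<eta>'_def)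
  define T where "T = min (\<rho>^2) (\<eta>' / (4 * \<mu> + 1))"
  have "0 < T" using \<open>0 < \<rho>\<close> \<open>0 < \<eta>'\<close> \<open>0 \<le> \<mu>\<close> by (simp add: T_def)
  have "T \<le> \<rho>^2" by (simp add: T_def)
  then have "{z0} \<times> {s0 - T..s0} \<subseteq> closed_Qminus \<rho> p0"
    using \<open>0 < \<rho>\<close> by (auto simp: closed_Qminus_def p0)
  with CU have "{z0} \<times> {s0 - T..s0} \<subseteq> U" by blast
  then obtain \<tau> where "0 < \<tau>" "\<tau> \<le> T" and up': "\<bar>u (z0, s0 - \<tau>) - u p0\<bar> < \<eta>' / 2"
    using continuous_on_close_at_earlier_time[OF uc _ _ \<open>0 < T\<close>, of z0 s0 "\<eta>' / 2"]
      \<open>p0 \<in> \<Omega>\<close> \<open>0 < \<eta>'\<close> by (auto simp: \<Omega>_def p0)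
  define p' where "p' = (z0, s0 - \<tau>)"
  have "\<mu> * \<tau> \<le> \<mu> * (\<eta>' / (4 * \<mu> + 1))"
    using \<open>\<tau> \<le> T\<close> \<open>0 \<le> \<mu>\<close> unfolding T_def by (intro mult_left_mono) auto
  also have "\<dots> \<le> \<eta>' / 4" using \<open>0 \<le> \<mu>\<close> \<open>0 < \<eta>'\<close> by (simp add: field_simps)
  finally have "\<mu> * \<tau> \<le> \<eta>' / 4" .
  \<comment> \<open>chosen so that the singular term of the barrier at \<open>p'\<close> is exactly \<open>\<eta>' / 4\<close>\<close>
  define \<epsilon> where "\<epsilon> = \<tau> * \<eta>' / 4"
  have "0 < \<epsilon>" using \<open>0 < \<tau>\<close> \<open>0 < \<eta>'\<close> by (simp add: \<epsilon>_def)
  have "G \<epsilon> p' = u p' - \<mu> * \<tau> - \<eta>' / 4"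
    using \<open>0 < \<tau>\<close> by (simp add: G_def barrier_def p'_def p0 \<epsilon>_def)
  moreover have up'_close: "u p0 - \<eta>' / 2 < u p'" using up' unfolding p'_def by arith
  ultimately have Gp': "u p0 - \<eta> \<le> G \<epsilon> p'" "0 < G \<epsilon> p'"
    using \<open>\<mu> * \<tau> \<le> \<eta>' / 4\<close> \<eta>'_le \<open>0 < u p0\<close> by linarith+
  have "p' \<in> closed_Qminus \<rho> p0"
    using \<open>0 < \<rho>\<close> \<open>0 < \<tau>\<close> \<open>\<tau> \<le> T\<close> \<open>T \<le> \<rho>^2\<close> by (simp add: closed_Qminus_def p0 p'_def)
  with CU have "p' \<in> \<Omega>"
    using up'_close \<eta>'_le \<open>0 < u p0\<close> by (auto simp: \<Omega>_def)
  obtain M where M: "\<forall>p \<in> closed_Qminus \<rho> p0. u p \<le> M"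
    using compact_continuous_image[OF continuous_on_subset[OF uc CU] compact_closed_Qminus]
    by (meson bdd_above.E bounded_imp_bdd_above compact_imp_bounded imageI)
  \<comment> \<open>on the top face \<open>t = s0 - \<delta>\<close> the barrier exceeds every value of u\<close>
  define \<delta> where "\<delta> = min \<tau> (\<epsilon> / max 1 M)"
  have "0 < \<delta>" "\<delta> \<le> \<tau>" using \<open>0 < \<tau>\<close> \<open>0 < \<epsilon>\<close> by (auto simp: \<delta>_def)
  have "\<delta> * max 1 M \<le> \<epsilon>" using pos_le_divide_eq[of "max 1 M" \<delta> \<epsilon>] by (simp add: \<delta>_def)
  then have "max 1 M \<le> \<epsilon> / \<delta>" using \<open>0 < \<delta>\<close> by (metis pos_le_divide_eq mult.commute)
  then have uB: "\<forall>p \<in> closed_Qminus \<rho> p0. u p \<le> \<epsilon> / \<delta>" using M by force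
  define K where "K = closure \<Omega> \<inter> (cball (fst p0) \<rho> \<times> {snd p0 - \<rho>^2 .. snd p0 - \<delta>})"
  have "p' \<in> K"
    using \<open>p' \<in> \<Omega>\<close> closure_subset \<open>p' \<in> closed_Qminus \<rho> p0\<close> \<open>\<delta> \<le> \<tau>\<close>
    by (auto simp: K_def closed_Qminus_def p'_def p0)
  have "K \<subseteq> closed_Qminus \<rho> p0" using \<open>0 < \<delta>\<close> by (auto simp: K_def closed_Qminus_def)
  have "continuous_on K (G \<epsilon>)"
    unfolding G_def barrier_def using \<open>0 < \<delta>\<close> \<open>K \<subseteq> closed_Qminus \<rho> p0\<close> CU
    by (intro continuous_intros continuous_on_subset[OF uc]) (auto simp: K_def)
  moreover have "compact K"
    unfolding K_def by (intro closed_Int_compact compact_Times compact_cball compact_Icc) simp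
  ultimately obtain q where "q \<in> K" and qmax: "\<forall>p \<in> K. G \<epsilon> p \<le> G \<epsilon> q"
    using continuous_attains_sup \<open>p' \<in> K\<close> by blast
  then have "G \<epsilon> p' \<le> G \<epsilon> q" using \<open>p' \<in> K\<close> by blast
  have "q \<in> par_bdry \<rho> p0"
    using barrier_max_on_par_bdry[OF A _ _ c0 \<open>0 \<le> \<mu>\<close> \<open>0 < \<epsilon>\<close> \<open>0 < \<delta>\<close> CU uB]
      sub fc \<open>q \<in> K\<close> qmax Gp'(2) \<open>G \<epsilon> p' \<le> G \<epsilon> q\<close>
    unfolding K_def \<Omega>_def G_def by fastforce
  moreover have "snd q < snd p0" using \<open>q \<in> K\<close> \<open>0 < \<delta>\<close> by (auto simp: K_def)
  ultimately have "\<mu> * \<rho>^2 \<le> barrier \<mu> \<epsilon> p0 q"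
    by (rule barrier_ge_on_par_bdry) (use \<open>0 \<le> \<mu>\<close> \<open>0 < \<epsilon>\<close> in auto)
  then show ?thesis
    using \<open>q \<in> par_bdry \<rho> p0\<close> Gp'(1) \<open>G \<epsilon> p' \<le> G \<epsilon> q\<close> unfolding G_def
    by (intro bexI[of _ q]) auto
qed

lemma growth_from_closure_point:
  fixes F :: "real^'n::finite \<Rightarrow> real \<Rightarrow> real^'n^'n \<Rightarrow> real" and u f :: "'n pt \<Rightarrow> real"
    and U :: "'n pt set"
  defines "\<Omega> \<equiv> {p \<in> U. u p > 0}"
  assumes A: "A1 U lam Lam \<alpha> F" and uc: "continuous_on U u" and sub: "visc_sub F f \<Omega> u"
    and fc: "\<forall>p \<in> \<Omega>. c0 \<le> f p" and c0: "(2 * Lam + 1) * \<mu> \<le> c0" and "0 \<le> \<mu>"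
    and "open U" and "zs \<in> closure \<Omega>" and "0 < r" and CU: "closed_Qminus r zs \<subseteq> U" and "0 < \<eta>"
  shows "\<exists>q \<in> par_bdry r zs. \<mu> * r^2 + u zs - \<eta> \<le> u q"
proof -
  define C where "C = closed_Qminus r zs"
  obtain d0 where "0 < d0" and d0: "(\<Union>x\<in>C. cball x d0) \<subseteq> U"
    using compact_subset_open_imp_cball_epsilon_subset[OF compact_closed_Qminus \<open>open U\<close> CU]
    unfolding C_def by blast
  define KK where "KK = {x + y |x y. x \<in> C \<and> y \<in> cball 0 d0}"
  have inKK: "x + y \<in> KK" if "x \<in> C" "norm y \<le> d0" for x y
    using that unfolding KK_def by (intro CollectI exI[of _ x] exI[of _ y]) simp
  have "KK \<subseteq> U"
  proof
    fix w assume "w \<in> KK"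
    then obtain x y where "w = x + y" "x \<in> C" "norm y \<le> d0" by (auto simp: KK_def)
    then have "w \<in> cball x d0" by (simp add: dist_norm)
    then show "w \<in> U" using d0 \<open>x \<in> C\<close> by blast
  qed
  have "compact KK"
    unfolding KK_def C_def by (intro compact_sums compact_closed_Qminus compact_cball)
  then have "uniformly_continuous_on KK u"
    using compact_uniformly_continuous continuous_on_subset[OF uc \<open>KK \<subseteq> U\<close>] by blast
  moreover have \<eta>3: "0 < \<eta> / 3" using \<open>0 < \<eta>\<close> by simp
  ultimately obtain d1 where "0 < d1"
    and d1: "\<And>x x'. x \<in> KK \<Longrightarrow> x' \<in> KK \<Longrightarrow> dist x' x < d1 \<Longrightarrow> \<bar>u x' - u x\<bar> < \<eta> / 3"
    unfolding uniformly_continuous_on_def dist_real_def by blast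
  have "0 < min d0 d1" using \<open>0 < d0\<close> \<open>0 < d1\<close> by simp
  then obtain p0 where "p0 \<in> \<Omega>" and "dist p0 zs < min d0 d1"
    using \<open>zs \<in> closure \<Omega>\<close> unfolding closure_approachable by blast
  define v where "v = p0 - zs"
  have v: "norm v < d0" "norm v < d1" using \<open>dist p0 zs < min d0 d1\<close> by (simp_all add: v_def dist_norm)
  have p0_eq: "p0 = zs + v" by (simp add: v_def)
  have "closed_Qminus r p0 \<subseteq> U"
  proof
    fix w assume "w \<in> closed_Qminus r p0"
    then have "w - v \<in> C" using translate_mem_closed_Qminus[of "w - v" v] by (simp add: C_def p0_eq)
    then have "(w - v) + v \<in> KK" using v by (intro inKK) auto
    then show "w \<in> U" using \<open>KK \<subseteq> U\<close> by auto
  qed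
  then obtain q' where "q' \<in> par_bdry r p0" and q': "\<mu> * r^2 + u p0 - \<eta> / 3 \<le> u q'"
    using growth_from_positive_point[OF A uc _ _ c0 \<open>0 \<le> \<mu>\<close> _ \<open>0 < r\<close> _ \<eta>3]
      sub fc \<open>p0 \<in> \<Omega>\<close> unfolding \<Omega>_def by blast
  define q where "q = q' - v"
  have "q \<in> par_bdry r zs"
    using \<open>q' \<in> par_bdry r p0\<close> translate_mem_par_bdry[of q v] by (simp add: q_def p0_eq)
  then have "q \<in> C" unfolding C_def using par_bdry_subset_closed_Qminus by blast
  have zsC: "zs \<in> C" using \<open>0 < r\<close> by (cases zs) (simp add: C_def closed_Qminus_def)
  have "\<bar>u q' - u q\<bar> < \<eta> / 3"
    using d1 inKK[OF \<open>q \<in> C\<close>, of 0] inKK[OF \<open>q \<in> C\<close>, of v] v \<open>0 < d0\<close>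
    by (simp add: q_def dist_norm)
  moreover have "\<bar>u p0 - u zs\<bar> < \<eta> / 3"
    using d1 inKK[OF zsC, of 0] inKK[OF zsC, of v] v \<open>0 < d0\<close>
    by (simp add: p0_eq dist_norm)
  ultimately have "\<mu> * r^2 + u zs - \<eta> \<le> u q" using q' by arith
  with \<open>q \<in> par_bdry r zs\<close> show ?thesis by blast
qed

lemma growth_constant_admissible:
  fixes c0 Lam n :: real
  assumes "0 < c0" "0 < Lam" "1 \<le> n"
  shows "(2 * Lam + 1) * min (c0 / 2) (c0 / (4 * n * Lam)) \<le> c0"
proof -
  have "2 * Lam * (c0 / (4 * n * Lam)) = c0 / (2 * n)" using assms by (simp add: field_simps)
  also have "\<dots> \<le> c0 / 2" using assms by (intro divide_left_mono) auto
  finally have "2 * Lam * min (c0 / 2) (c0 / (4 * n * Lam)) \<le> c0 / 2"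
    using mult_left_mono[OF min.cobounded2, of "2 * Lam" "c0 / 2" "c0 / (4 * n * Lam)"] assms(2)
    by linarith
  then show ?thesis by (simp add: algebra_simps)
qed

theorem lemma6p1:
  fixes F :: "real ^ 'n::finite \<Rightarrow> real \<Rightarrow> real ^ 'n ^ 'n \<Rightarrow> real"
    and u f :: "(real ^ 'n) \<times> real \<Rightarrow> real"
    and lam Lam \<alpha> c0 r :: real and z :: "real ^ 'n" and s :: real
  assumes "A1 Q1 lam Lam \<alpha> F"
    and "continuous_on Q1 u"
    and "visc_sol F f {p \<in> Q1. u p > 0} u"
    and "0 < c0" and "\<forall>p \<in> {p \<in> Q1. u p > 0}. c0 \<le> f p"
    and "(z, s) \<in> closure {p \<in> Q1. u p > 0}"
    and "0 < r" and "Qcyl r (z, s) \<subseteq> Q1"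
    and "par_bdry r (z, s) \<subseteq> Q1"
  shows "Sup (u ` par_bdry r (z, s))
           \<ge> min (c0 / 2) (c0 / (4 * real CARD('n) * Lam)) * r^2 + u (z, s)"
proof -
  define \<mu>0 where "\<mu>0 = min (c0 / 2) (c0 / (4 * real CARD('n) * Lam))"
  have "0 < Lam" using assms(1) unfolding A1_def by linarith
  then have "(2 * Lam + 1) * \<mu>0 \<le> c0" and "0 \<le> \<mu>0"
    using growth_constant_admissible[OF assms(4)] assms(4) by (simp_all add: \<mu>0_def)
  moreover have "closed_Qminus r (z, s) \<subseteq> Q1"
    using closed_Qminus_subset_Qcyl_Un_par_bdry assms(8,9) by blast
  moreover have "visc_sub F f {p \<in> Q1. u p > 0} u" using assms(3) by (simp add: visc_sol_def)
  ultimately have "\<exists>q \<in> par_bdry r (z, s). \<mu>0 * r^2 + u (z, s) - \<eta> \<le> u q" if "0 < \<eta>" for \<eta>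
    using growth_from_closure_point[OF assms(1,2) _ assms(5) _ _ open_Q1 assms(6,7) _ that] by blast
  moreover have "bdd_above (u ` par_bdry r (z, s))"
    using compact_continuous_image[OF continuous_on_subset[OF assms(2,9)] compact_par_bdry]
    by (simp add: bounded_imp_bdd_above compact_imp_bounded)
  ultimately show ?thesis unfolding \<mu>0_def[symmetric] by (intro le_Sup_image_if_approximated)
qed

end
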